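(* Let $r_1,\dots,r_N$ be positive numbers. If $f\colon\mathbb{R}^n\to\mathbb{R}^{N\times N}$ is a continuous function of positive type such that (i) $f(x)_{ij}\le 0$ whenever $\|x\|\ge r_i+r_j$, and (ii) $f(x)_{ij}\le -1$ whenever $\|x\|=r_i+r_j$, then the average degree of the contact graph of any packing of balls in $\mathbb{R}^n$ all of whose radii belong to $\{r_1,\dots,r_N\}$ is at most $\max\{f(0)_{ii}: i=1,\dots,N\}$.
   Context: A continuous $f\colon\mathbb{R}^n\to\mathbb{R}^{N\times N}$ is of positive type if for every finite set $U\subseteq\mathbb{R}^n$ the block matrix $(f(x-y))_{x,y\in U}$ (of size $N|U|\times N|U|$) is positive semidefinite. A packing of balls is a finite set of closed balls with pairwise disjoint interiors; its contact graph has the balls as vertices, two distinct balls adjacent iff they are tangent. The average degree of a graph $(V,E)$ is $2|E|/|V|$. *)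

theory Defs
  imports "HOL-Analysis.Analysis"
begin

text \<open>Matrix-valued functions on R^n: f :: real^'n => real^'m^'m, where 'm indexes {1..N}.
  f is of positive type: for every finite U the block matrix (f(x-y))_{x,y in U}
  (rows indexed by (x,i), columns by (y,j)) is positive semidefinite, i.e. symmetric
  with nonnegative quadratic form.\<close>

definition positive_type :: "(real^'n \<Rightarrow> real^'m^'m) \<Rightarrow> bool" where
  "positive_type f \<longleftrightarrow>
     (\<forall>U. finite U \<longrightarrow>
        (\<forall>x\<in>U. \<forall>y\<in>U. \<forall>i j. f (x - y) $ i $ j = f (y - x) $ j $ i) \<and>
        (\<forall>c :: real^'n \<Rightarrow> 'm \<Rightarrow> real.
           0 \<le> (\<Sum>x\<in>U. \<Sum>y\<in>U. \<Sum>i\<in>UNIV. \<Sum>j\<in>UNIV. c x i * f (x - y) $ i $ j * c y j)))"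

text \<open>A ball is represented by (center, radius). A packing is a finite set of closed
  balls of positive radius with pairwise disjoint interiors.\<close>

definition ball_packing :: "((real^'n) \<times> real) set \<Rightarrow> bool" where
  "ball_packing P \<longleftrightarrow> finite P \<and> (\<forall>(c, \<rho>)\<in>P. 0 < \<rho>) \<and>
     (\<forall>(c, \<rho>)\<in>P. \<forall>(d, \<sigma>)\<in>P. (c, \<rho>) \<noteq> (d, \<sigma>) \<longrightarrow>
        interior (cball c \<rho>) \<inter> interior (cball d \<sigma>) = {})"

text \<open>Two balls (with disjoint interiors) are tangent iff they touch.\<close>

definition tangent :: "(real^'n) \<times> real \<Rightarrow> (real^'n) \<times> real \<Rightarrow> bool" where
  "tangent B B' \<longleftrightarrow> B \<noteq> B' \<and> cball (fst B) (snd B) \<inter> cball (fst B') (snd B') \<noteq> {}"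

definition contact_edges :: "((real^'n) \<times> real) set \<Rightarrow> ((real^'n) \<times> real) set set" where
  "contact_edges P = {{B, B'} | B B'. B \<in> P \<and> B' \<in> P \<and> B \<noteq> B' \<and> tangent B B'}"

definition average_degree :: "((real^'n) \<times> real) set \<Rightarrow> real" where
  "average_degree P = 2 * real (card (contact_edges P)) / real (card P)"

end

theory Submission
  imports Defs
begin

text \<open>Apply the positive-type inequality to the centres of the balls, weighting each centre with
  the unit vector of the index of its radius. A diagonal term is at most \<open>max\<^sub>i f(0)\<^sub>i\<^sub>i\<close>.
  Two distinct balls of the packing are at distance at least the sum of their radii, so their
  term is \<open>\<le> 0\<close>, and \<open>\<le> -1\<close> when they touch. Summing, \<open>0 \<le> |P| max\<^sub>i f(0)\<^sub>i\<^sub>i - 2|E|\<close>.\<close>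

lemma disjoint_ballD:
  fixes c d :: "'a::real_normed_vector"
  assumes "0 < \<rho>" "0 < \<sigma>" "ball c \<rho> \<inter> ball d \<sigma> = {}"
  shows "\<rho> + \<sigma> \<le> dist c d"
proof (rule ccontr)
  assume "\<not> \<rho> + \<sigma> \<le> dist c d"
  then have close: "dist c d < \<rho> + \<sigma>" by simp
  define p where "p = c + (\<rho> / (\<rho> + \<sigma>)) *\<^sub>R (d - c)"
  have "dist c p = \<rho> / (\<rho> + \<sigma>) * dist c d"
    using assms by (simp add: p_def dist_norm norm_minus_commute)
  also have "\<dots> < \<rho>"
    using close assms by (simp add: divide_less_eq mult.commute)
  finally have "p \<in> ball c \<rho>" by simp
  have weights: "\<rho> / (\<rho> + \<sigma>) = 1 - \<sigma> / (\<rho> + \<sigma>)"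
    using assms by (simp add: field_simps)
  have "d - p = (\<sigma> / (\<rho> + \<sigma>)) *\<^sub>R (d - c)"
    unfolding p_def weights by (simp add: algebra_simps)
  then have "dist d p = \<sigma> / (\<rho> + \<sigma>) * dist c d"
    using assms by (simp add: dist_norm norm_minus_commute)
  also have "\<dots> < \<sigma>"
    using close assms by (simp add: divide_less_eq mult.commute)
  finally have "p \<in> ball d \<sigma>" by simp
  with \<open>p \<in> ball c \<rho>\<close> show False
    using assms(3) by blast
qed

lemma sum_unit_bilinear_form:
  fixes A :: "real^'m::finite^'m"
  shows "(\<Sum>i\<in>UNIV. \<Sum>j\<in>UNIV. of_bool (i = k) * A $ i $ j * of_bool (j = l)) = A $ k $ l"
  by (simp add: mult.assoc flip: sum_distrib_left)

lemma positive_type_labelled_sum_nonneg: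
  fixes f :: "real^'n \<Rightarrow> real^'m::finite^'m" and p :: "'a \<Rightarrow> real^'n" and l :: "'a \<Rightarrow> 'm"
  assumes "positive_type f" "finite S" "inj_on p S"
  shows "0 \<le> (\<Sum>s\<in>S. \<Sum>t\<in>S. f (p s - p t) $ l s $ l t)"
proof -
  define c :: "real^'n \<Rightarrow> 'm \<Rightarrow> real" where "c x k = of_bool (k = l (inv_into S p x))" for x k
  have "0 \<le> (\<Sum>x\<in>p ` S. \<Sum>y\<in>p ` S. \<Sum>i\<in>UNIV. \<Sum>j\<in>UNIV. c x i * f (x - y) $ i $ j * c y j)"
    using assms(1,2) unfolding positive_type_def by blast
  also have "\<dots> = (\<Sum>x\<in>p ` S. \<Sum>y\<in>p ` S. f (x - y) $ l (inv_into S p x) $ l (inv_into S p y))"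
    unfolding c_def sum_unit_bilinear_form ..
  also have "\<dots> = (\<Sum>s\<in>S. \<Sum>t\<in>S. f (p s - p t) $ l s $ l t)"
    using assms(3) by (simp add: sum.reindex)
  finally show ?thesis .
qed

lemma positive_type_diag_nonneg:
  assumes "positive_type f"
  shows "0 \<le> f 0 $ i $ i"
  using positive_type_labelled_sum_nonneg[OF assms, of "{0}" id "\<lambda>_. i"] by simp

lemma sum_card_neighbours_eq_twice_card_edges:
  assumes "finite V" and sym: "\<And>x y. R x y \<Longrightarrow> R y x" and irrefl: "\<And>x. \<not> R x x"
  shows "(\<Sum>x\<in>V. card {y\<in>V. R x y}) = 2 * card {{x, y} | x y. x \<in> V \<and> y \<in> V \<and> x \<noteq> y \<and> R x y}"
    (is "_ = 2 * card ?E")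
proof -
  have "finite ?E"
    by (rule finite_subset[of _ "Pow V"]) (use \<open>finite V\<close> in auto)
  have "card {y\<in>V. R x y} = card {e\<in>?E. x \<in> e}" if "x \<in> V" for x
  proof -
    have "{e\<in>?E. x \<in> e} = (\<lambda>y. {x, y}) ` {y\<in>V. R x y}"
    proof (intro equalityI subsetI)
      fix e assume "e \<in> {e\<in>?E. x \<in> e}"
      then obtain a b where "e = {a, b}" "a \<in> V" "b \<in> V" "R a b" "x = a \<or> x = b"
        by blast
      then show "e \<in> (\<lambda>y. {x, y}) ` {y\<in>V. R x y}"
        using sym by (auto simp: insert_commute)
    next
      fix e assume "e \<in> (\<lambda>y. {x, y}) ` {y\<in>V. R x y}"
      then show "e \<in> {e\<in>?E. x \<in> e}"
        using that irrefl by blast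
    qed
    moreover have "inj_on (\<lambda>y. {x, y}) {y\<in>V. R x y}"
      by (auto simp: inj_on_def doubleton_eq_iff)
    ultimately show ?thesis by (simp add: card_image)
  qed
  moreover have "\<forall>e\<in>?E. card {x\<in>V. x \<in> e} = 2"
  proof
    fix e assume "e \<in> ?E"
    then obtain a b where "e = {a, b}" "a \<in> V" "b \<in> V" "a \<noteq> b"
      by blast
    then have "{x\<in>V. x \<in> e} = {a, b}" by auto
    with \<open>a \<noteq> b\<close> show "card {x\<in>V. x \<in> e} = 2" by simp
  qed
  ultimately show ?thesis
    using sum_multicount[OF \<open>finite V\<close> \<open>finite ?E\<close>, of "\<lambda>x e. x \<in> e"] by simp
qed

lemma tangent_sym: "tangent B B' \<Longrightarrow> tangent B' B"
  unfolding tangent_def by blast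

lemma tangent_irrefl: "\<not> tangent B B"
  unfolding tangent_def by blast

lemma sum_card_tangent_eq_twice_card_contact_edges:
  assumes "finite P"
  shows "(\<Sum>B\<in>P. card {B'\<in>P. tangent B B'}) = 2 * card (contact_edges P)"
  unfolding contact_edges_def
  using sum_card_neighbours_eq_twice_card_edges[OF assms tangent_sym tangent_irrefl] .

lemma ball_packingD:
  assumes "ball_packing P"
  shows "finite P" and "B \<in> P \<Longrightarrow> 0 < snd B"
    and "\<lbrakk>B \<in> P; B' \<in> P; B \<noteq> B'\<rbrakk>
          \<Longrightarrow> interior (cball (fst B) (snd B)) \<inter> interior (cball (fst B') (snd B')) = {}"
  using assms unfolding ball_packing_def case_prod_beta prod.collapse by blast+

lemma ball_packing_dist_ge:
  assumes "ball_packing P" "B \<in> P" "B' \<in> P" "B \<noteq> B'"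
  shows "snd B + snd B' \<le> dist (fst B) (fst B')"
  using ball_packingD[OF assms(1)] assms(2-4) by (simp add: disjoint_ballD)

lemma ball_packing_inj_on_fst:
  assumes "ball_packing P"
  shows "inj_on fst P"
proof (rule inj_onI, rule ccontr)
  fix B B' assume "B \<in> P" "B' \<in> P" "fst B = fst B'" "B \<noteq> B'"
  moreover have "0 < snd B" "0 < snd B'"
    using ball_packingD(2)[OF assms] \<open>B \<in> P\<close> \<open>B' \<in> P\<close> by auto
  ultimately show False
    using ball_packing_dist_ge[OF assms, of B B'] by simp
qed

lemma ball_packing_tangent_dist:
  assumes "ball_packing P" "B \<in> P" "B' \<in> P" "tangent B B'"
  shows "dist (fst B) (fst B') = snd B + snd B'"
proof -
  have "dist (fst B) (fst B') \<le> snd B + snd B'"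
    using assms(4) disjoint_cballI[of "snd B" "snd B'" "fst B" "fst B'"]
    unfolding tangent_def by fastforce
  moreover have "snd B + snd B' \<le> dist (fst B) (fst B')"
    using ball_packing_dist_ge assms tangent_def by blast
  ultimately show ?thesis by linarith
qed

lemma ball_packing_row_sum_le:
  fixes f :: "real^'n \<Rightarrow> real^'m::finite^'m"
  assumes f_nonpos: "\<And>x i j. norm x \<ge> r i + r j \<Longrightarrow> f x $ i $ j \<le> 0"
    and f_contact: "\<And>x i j. norm x = r i + r j \<Longrightarrow> f x $ i $ j \<le> -1"
    and P: "ball_packing P" and l: "\<forall>B\<in>P. snd B = r (l B)" and "B \<in> P"
  shows "(\<Sum>B'\<in>P. f (fst B - fst B') $ l B $ l B')
           \<le> f 0 $ l B $ l B - real (card {B'\<in>P. tangent B B'})"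
proof -
  have "finite P"
    using ball_packingD(1)[OF P] .
  have "f (fst B - fst B') $ l B $ l B' \<le> - of_bool (tangent B B')" if "B' \<in> P - {B}" for B'
  proof -
    have radii: "snd B + snd B' = r (l B) + r (l B')"
      using l \<open>B \<in> P\<close> that by simp
    show ?thesis
    proof (cases "tangent B B'")
      case True
      then have "norm (fst B - fst B') = r (l B) + r (l B')"
        using ball_packing_tangent_dist[OF P \<open>B \<in> P\<close>] that radii by (simp add: dist_norm)
      then show ?thesis
        using True f_contact by simp
    next
      case False
      have "r (l B) + r (l B') \<le> norm (fst B - fst B')"
        using ball_packing_dist_ge[OF P \<open>B \<in> P\<close>, of B'] that radii by (auto simp: dist_norm)
      then show ?thesis
        using False f_nonpos by simp
    qed
  qed
  then have "(\<Sum>B'\<in>P - {B}. f (fst B - fst B') $ l B $ l B') \<le> (\<Sum>B'\<in>P - {B}. - of_bool (tangent B B'))"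
    by (rule sum_mono)
  also have "\<dots> = - real (card ((P - {B}) \<inter> {B'. tangent B B'}))"
    using \<open>finite P\<close> by (simp add: sum_negf)
  also have "(P - {B}) \<inter> {B'. tangent B B'} = {B'\<in>P. tangent B B'}"
    using tangent_irrefl by blast
  finally show ?thesis
    using \<open>finite P\<close> \<open>B \<in> P\<close> by (simp add: sum.remove)
qed

theorem theorem4p1:
  fixes r :: "'m::finite \<Rightarrow> real"
    and f :: "real^'n \<Rightarrow> real^'m^'m"
    and P :: "((real^'n) \<times> real) set"
  assumes r_pos: "\<And>i. 0 < r i"
    and f_cont: "continuous_on UNIV f"
    and f_pos: "positive_type f"
    and f_i: "\<And>x i j. norm x \<ge> r i + r j \<Longrightarrow> f x $ i $ j \<le> 0"
    and f_ii: "\<And>x i j. norm x = r i + r j \<Longrightarrow> f x $ i $ j \<le> -1"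
    and P_pack: "ball_packing P"
    and P_radii: "\<forall>B\<in>P. \<exists>i. snd B = r i"
  shows "average_degree P \<le> Max (range (\<lambda>i. f 0 $ i $ i))"
proof -
  define M where "M = Max (range (\<lambda>i. f 0 $ i $ i))"
  have M_ge: "f 0 $ i $ i \<le> M" for i
    unfolding M_def by (rule Max_ge) auto
  obtain l where l: "\<forall>B\<in>P. snd B = r (l B)"
    using bchoice[OF P_radii] by blast
  have "finite P"
    using ball_packingD(1)[OF P_pack] .
  have row: "(\<Sum>B'\<in>P. f (fst B - fst B') $ l B $ l B')
      \<le> f 0 $ l B $ l B - real (card {B'\<in>P. tangent B B'})" if "B \<in> P" for B
    using f_i f_ii P_pack l that by (rule ball_packing_row_sum_le)
  have "0 \<le> (\<Sum>B\<in>P. \<Sum>B'\<in>P. f (fst B - fst B') $ l B $ l B')"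
    using positive_type_labelled_sum_nonneg[OF f_pos \<open>finite P\<close> ball_packing_inj_on_fst[OF P_pack]] .
  also have "\<dots> \<le> (\<Sum>B\<in>P. M - real (card {B'\<in>P. tangent B B'}))"
    by (intro sum_mono order_trans[OF row] diff_right_mono M_ge)
  also have "\<dots> = real (card P) * M - 2 * real (card (contact_edges P))"
    using sum_card_tangent_eq_twice_card_contact_edges[OF \<open>finite P\<close>]
    by (simp add: sum_subtractf flip: of_nat_sum)
  finally have "2 * real (card (contact_edges P)) \<le> real (card P) * M"
    by simp
  \<comment> \<open>needed for the empty packing, whose average degree is \<open>0 / 0 = 0\<close>\<close>
  moreover have "0 \<le> M"
    using order_trans[OF positive_type_diag_nonneg[OF f_pos] M_ge] .
  ultimately show ?thesis
    unfolding average_degree_def M_def[symmetric] by (simp add: divide_le_eq mult.commute)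
qed

end
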